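(* Let $n\ge2$ and let $g:\mathcal{D}_n\to\mathbb{R}$ be jointly Lebesgue measurable. Consider the conditions: (D1) for every $\mathbf{R}\in[0,\infty)^n\setminus\{\mathbf{0}\}$, $\boldsymbol{\pi}\mapsto g(\boldsymbol{\pi},\mathbf{R})$ is concave on $\mathcal{D}_n(\cdot\mid\mathbf{R})$; (D2) $g(\boldsymbol{\pi},\mathbf{R})=0$ whenever $\mathbf{R}$ is constant on $\supp(\boldsymbol{\pi})$; (D3) $g(\boldsymbol{\pi},\alpha\mathbf{R})=g(\boldsymbol{\pi},\mathbf{R})$ for all $(\boldsymbol{\pi},\mathbf{R})\in\mathcal{D}_n$ and $\alpha>0$; (D4) there exist a Lebesgue measurable map $\mathbf{a}:[0,\infty)^n\setminus\{\mathbf{0}\}\to\mathbb{R}^n$ and a Lebesgue measurable $b:(0,\infty)\to\mathbb{R}$ such that for every $m\in(0,\infty)$ and $\mathbf{R}\in[0,\infty)^n\setminus\{\mathbf{0}\}$, $g(\boldsymbol{\pi},\mathbf{R})=\langle\mathbf{a}(\mathbf{R}),\boldsymbol{\pi}\rangle+b(m)$ for all $\boldsymbol{\pi}\in C_{m,\mathbf{R}}$, where $C_{m,\mathbf{R}}=\{\boldsymbol{\pi}\in\mathcal{D}_n(\cdot\mid\mathbf{R}):\langle\boldsymbol{\pi},\mathbf{R}\rangle=m\}$. Then: (i) $g$ is a gap function with a Lebesgue measurable generator if and only if $g$ satisfies (D2) and (D4); in that case, its generator is concave if and only if (D1) holds. (ii) $g$ satisfies (D2), (D3) and (D4) if and only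 if $g=c\,\Gamma$ for some $c\in\mathbb{R}$; in that case, $c\ge0$ if and only if (D1) holds.
   Context: $\Delta_n=\{\mathbf{x}\in[0,1]^n:\sum_ix_i=1\}$; $\supp(\mathbf{x})=\{i:x_i>0\}$; $\mathcal{D}_n=\{(\boldsymbol{\pi},\mathbf{R})\in\Delta_n\times[0,\infty)^n:\supp(\boldsymbol{\pi})\subseteq\supp(\mathbf{R})\}$; for $\mathbf{R}\in[0,\infty)^n\setminus\{\mathbf{0}\}$, $\mathcal{D}_n(\cdot\mid\mathbf{R})=\{\boldsymbol{\pi}\in\Delta_n:(\boldsymbol{\pi},\mathbf{R})\in\mathcal{D}_n\}$. A function $g:\mathcal{D}_n\to\mathbb{R}$ is a gap function with generator $\varphi:(0,\infty)\to\mathbb{R}$ if $g(\boldsymbol{\pi},\mathbf{R})=\varphi\big(\sum_{i\in\supp(\boldsymbol{\pi})}\pi_iR_i\big)-\sum_{i\in\supp(\boldsymbol{\pi})}\pi_i\varphi(R_i)$ for all $(\boldsymbol{\pi},\mathbf{R})\in\mathcal{D}_n$. The excess growth rate $\Gamma$ is the gap function with generator $\varphi=\log$. *)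

theory Defs
  imports "HOL-Analysis.Analysis"
begin

text \<open>Vectors in R^n are modelled as real^'n with the finite index type 'n (n = CARD('n)).\<close>

definition supp_vec :: "real ^ 'n \<Rightarrow> 'n set" where
  "supp_vec x = {i. x $ i > 0}"

definition prob_simplex :: "(real ^ 'n) set" where
  "prob_simplex = {x. (\<forall>i. 0 \<le> x $ i \<and> x $ i \<le> 1) \<and> (\<Sum>i\<in>UNIV. x $ i) = 1}"

definition Dn :: "((real ^ 'n) \<times> (real ^ 'n)) set" where
  "Dn = {(p, R). p \<in> prob_simplex \<and> (\<forall>i. 0 \<le> R $ i) \<and> supp_vec p \<subseteq> supp_vec R}"

definition Rset :: "(real ^ 'n) set" where
  "Rset = {R. (\<forall>i. 0 \<le> R $ i) \<and> R \<noteq> 0}"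

definition Dcond :: "real ^ 'n \<Rightarrow> (real ^ 'n) set" where
  "Dcond R = {p. (p, R) \<in> Dn}"

definition is_gap_function :: "(real ^ 'n \<Rightarrow> real ^ 'n \<Rightarrow> real) \<Rightarrow> (real \<Rightarrow> real) \<Rightarrow> bool" where
  "is_gap_function g \<phi> \<longleftrightarrow>
     (\<forall>(p, R) \<in> Dn. g p R = \<phi> (\<Sum>i\<in>supp_vec p. p $ i * R $ i) - (\<Sum>i\<in>supp_vec p. p $ i * \<phi> (R $ i)))"

definition Gamma :: "real ^ 'n \<Rightarrow> real ^ 'n \<Rightarrow> real" where
  "Gamma p R = ln (\<Sum>i\<in>supp_vec p. p $ i * R $ i) - (\<Sum>i\<in>supp_vec p. p $ i * ln (R $ i))"

definition D1 :: "(real ^ 'n \<Rightarrow> real ^ 'n \<Rightarrow> real) \<Rightarrow> bool" where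
  "D1 g \<longleftrightarrow> (\<forall>R \<in> Rset. concave_on (Dcond R) (\<lambda>p. g p R))"

definition D2 :: "(real ^ 'n \<Rightarrow> real ^ 'n \<Rightarrow> real) \<Rightarrow> bool" where
  "D2 g \<longleftrightarrow> (\<forall>(p, R) \<in> Dn. (\<forall>i\<in>supp_vec p. \<forall>j\<in>supp_vec p. R $ i = R $ j) \<longrightarrow> g p R = 0)"

definition D3 :: "(real ^ 'n \<Rightarrow> real ^ 'n \<Rightarrow> real) \<Rightarrow> bool" where
  "D3 g \<longleftrightarrow> (\<forall>(p, R) \<in> Dn. \<forall>\<alpha>::real. \<alpha> > 0 \<longrightarrow> g p (\<alpha> *\<^sub>R R) = g p R)"

definition Cset :: "real \<Rightarrow> real ^ 'n \<Rightarrow> (real ^ 'n) set" where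
  "Cset m R = {p \<in> Dcond R. p \<bullet> R = m}"

definition D4 :: "(real ^ 'n \<Rightarrow> real ^ 'n \<Rightarrow> real) \<Rightarrow> bool" where
  "D4 g \<longleftrightarrow> (\<exists>(a :: real ^ 'n \<Rightarrow> real ^ 'n) (b :: real \<Rightarrow> real).
      a \<in> borel_measurable (lebesgue_on Rset) \<and>
      b \<in> borel_measurable (lebesgue_on {0<..}) \<and>
      (\<forall>m > 0. \<forall>R \<in> Rset. \<forall>p \<in> Cset m R. g p R = a R \<bullet> p + b m))"

end

(* Testing D4 on the vertices e_k of the simplex, where D2 forces g = 0, shows that a(R)_k = -b(R_k)
   on supp p, so g is the gap function of b; conversely a gap function with generator phi satisfies D4
   with a(R)_i = -phi(R_i).  On a two-point distribution (t, 1 - t) against returns (x, y), a gap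
   function with generator phi equals the Jensen gap phi(t x + (1 - t) y) - t phi(x) - (1 - t) phi(y),
   which turns D1 into concavity of phi.  Under D3 the Jensen gap of b is invariant under scaling
   (x, y) to (alpha x, alpha y); hence x |-> b(alpha x) - b(x) is affine, and after removing an affine
   part b becomes a measurable solution of w(x y) = w(x) + w(y).  Through exp this is Cauchy's equation,
   whose measurable solutions are linear by Steinhaus' theorem, so b = c ln + affine, and the affine
   part does not contribute to the gap. *)

theory Submission
  imports Defs
begin

section \<open>Cauchy's functional equation\<close>

lemma additive_of_nat_mult:
  fixes f :: "real \<Rightarrow> real"
  assumes add: "\<And>x y. f (x + y) = f x + f y"
  shows "f (of_nat n * x) = of_nat n * f x"
proof -
  interpret Modules.additive f by unfold_locales (rule add)
  show ?thesis by (induction n) (simp_all add: zero add distrib_right)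
qed

lemma additive_of_int:
  fixes f :: "real \<Rightarrow> real"
  assumes add: "\<And>x y. f (x + y) = f x + f y"
  shows "f (of_int k) = of_int k * f 1"
proof -
  interpret Modules.additive f by unfold_locales (rule add)
  show ?thesis
  proof (cases "k \<ge> 0")
    case True
    then show ?thesis using additive_of_nat_mult[where f=f, OF add, of "nat k" 1] by simp
  next
    case False
    then have "f (of_int k) = - f (of_nat (nat (- k)) * 1)"
      by (simp add: minus[symmetric])
    then show ?thesis using additive_of_nat_mult[where f=f, OF add, of "nat (- k)" 1] False by simp
  qed
qed

lemma additive_vanishing_on_Ints_bounded_near_zero:
  fixes u :: "real \<Rightarrow> real"
  assumes add: "\<And>x y. u (x + y) = u x + u y" and ints: "\<And>k. u (of_int k) = 0"
    and "\<delta> > 0" and bnd: "\<And>t. \<bar>t\<bar> < \<delta> \<Longrightarrow> \<bar>u t\<bar> \<le> B"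
  shows "u x = 0"
  \<comment> \<open>n K u(x) = u(n K x) = u(frac(n K x)) = K u(frac(n K x) / K), and frac(n K x) / K lies in (-\<delta>, \<delta>).\<close>
proof (rule ccontr)
  assume "u x \<noteq> 0"
  obtain K :: nat where K: "1 < \<delta> * real K"
    using reals_Archimedean2[of "1 / \<delta>"] \<open>\<delta> > 0\<close> by (auto simp: field_simps)
  then have "K > 0" by (cases K) auto
  obtain N :: nat where N: "B / \<bar>u x\<bar> < real N" using reals_Archimedean2 by blast
  define y where "y = real N * (real K * x)"
  define r where "r = (y - of_int \<lfloor>y\<rfloor>) / real K"
  have "\<bar>r\<bar> < \<delta>"
    using K \<open>K > 0\<close> by (simp add: r_def divide_less_eq, linarith)
  have "u y = u (of_int \<lfloor>y\<rfloor> + real K * r)" using \<open>K > 0\<close> by (simp add: r_def)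
  also have "\<dots> = real K * u r"
    using add[of "of_int \<lfloor>y\<rfloor>"] ints[of "\<lfloor>y\<rfloor>"] additive_of_nat_mult[where f=u, OF add, of K r] by simp
  moreover have "u y = real K * (real N * u x)"
    by (simp add: y_def additive_of_nat_mult[where f=u, OF add])
  ultimately have "real N * u x = u r" using \<open>K > 0\<close> by simp
  then have "real N * \<bar>u x\<bar> \<le> B"
    using bnd[OF \<open>\<bar>r\<bar> < \<delta>\<close>] \<open>K > 0\<close> by (simp add: abs_mult)
  moreover have "B < real N * \<bar>u x\<bar>" using N \<open>u x \<noteq> 0\<close> by (simp add: divide_less_eq)
  ultimately show False by simp
qed

lemma additive_bounded_near_zero_linear:
  fixes f :: "real \<Rightarrow> real"
  assumes add: "\<And>x y. f (x + y) = f x + f y" and "\<delta> > 0" and bnd: "\<And>t. \<bar>t\<bar> < \<delta> \<Longrightarrow> \<bar>f t\<bar> \<le> B"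
  shows "f x = f 1 * x"
proof -
  define u where "u x = f x - f 1 * x" for x
  have u_add: "u (x + y) = u x + u y" for x y
    using add[of x y] by (simp add: u_def algebra_simps)
  have "u x = 0"
  proof (rule additive_vanishing_on_Ints_bounded_near_zero[where u=u, OF u_add _ \<open>\<delta> > 0\<close>])
    show "u (of_int k) = 0" for k using additive_of_int[where f=f, OF add, of k] by (simp add: u_def)
    show "\<bar>u t\<bar> \<le> B + \<bar>f 1\<bar> * \<delta>" if "\<bar>t\<bar> < \<delta>" for t
    proof -
      have "\<bar>f 1 * t\<bar> \<le> \<bar>f 1\<bar> * \<delta>" using that by (simp add: abs_mult mult_left_mono)
      then show ?thesis using bnd[OF that] unfolding u_def by linarith
    qed
  qed
  then show ?thesis by (simp add: u_def)
qed

text \<open>Steinhaus' theorem for compact sets: choose an open U \<supseteq> T with measure less than twice that of T;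
  translates of T by less than the distance from T to the complement of U stay in U, so they meet T.\<close>

lemma compact_translates_intersect:
  fixes T :: "'a::euclidean_space set"
  assumes "compact T" and pos: "measure lebesgue T > 0"
  obtains \<delta> where "\<delta> > 0" "\<And>t. norm t < \<delta> \<Longrightarrow> T \<inter> (+) t ` T \<noteq> {}"
proof -
  have T: "T \<in> lmeasurable" using \<open>compact T\<close> by (rule lmeasurable_compact)
  obtain U where "open U" "T \<subseteq> U" and UT: "U - T \<in> lmeasurable"
    and "emeasure lebesgue (U - T) < ennreal (measure lebesgue T)"
    using sets_lebesgue_outer_open[OF fmeasurableD[OF T] pos] by blast
  then have "measure lebesgue (U - T) < measure lebesgue T"
    by (metis UT emeasure_eq_measure2 ennreal_less_iff measure_nonneg)
  moreover have U: "U \<in> lmeasurable" using fmeasurable_Diff_D[OF UT T \<open>T \<subseteq> U\<close>] .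
  ultimately have U_small: "measure lebesgue U < 2 * measure lebesgue T"
    using measurable_measure_Diff[OF U fmeasurableD[OF T] \<open>T \<subseteq> U\<close>] by simp
  obtain \<delta> where "\<delta> > 0" and sep: "\<forall>x\<in>T. \<forall>y\<in>- U. \<delta> \<le> dist x y"
    using separate_compact_closed[OF \<open>compact T\<close>, of "- U"] \<open>open U\<close> \<open>T \<subseteq> U\<close> by auto
  show thesis
  proof (rule that[OF \<open>\<delta> > 0\<close>], rule notI)
    fix t :: 'a
    assume "norm t < \<delta>" and disjoint: "T \<inter> (+) t ` T = {}"
    have "(+) t ` T \<subseteq> U"
      using sep \<open>norm t < \<delta>\<close> by (force simp: dist_norm)
    have tT: "(+) t ` T \<in> lmeasurable" using measurable_translation[OF T] .
    have "2 * measure lebesgue T = measure lebesgue (T \<union> (+) t ` T)"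
      using measure_Un3[OF T tT] disjoint by (simp add: measure_translation)
    also have "\<dots> \<le> measure lebesgue U"
      using \<open>T \<subseteq> U\<close> \<open>(+) t ` T \<subseteq> U\<close>
      by (intro measure_mono_fmeasurable[OF _ _ U] sets.Un fmeasurableD[OF T] fmeasurableD[OF tT]) auto
    finally show False using U_small by simp
  qed
qed

lemma lebesgue_inner_compact:
  fixes E :: "'a::euclidean_space set"
  assumes E: "E \<in> sets lebesgue" "bounded E" and pos: "measure lebesgue E > 0"
  obtains T where "compact T" "T \<subseteq> E" "measure lebesgue T > 0"
proof -
  obtain T where "closed T" "T \<subseteq> E" and ET: "E - T \<in> lmeasurable"
    and "emeasure lebesgue (E - T) < ennreal (measure lebesgue E)"
    using sets_lebesgue_inner_closed[OF E(1) pos] by blast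
  then have "measure lebesgue (E - T) < measure lebesgue E"
    by (metis ET emeasure_eq_measure2 ennreal_less_iff measure_nonneg)
  moreover have "compact T"
    using \<open>closed T\<close> \<open>T \<subseteq> E\<close> E(2) bounded_subset compact_eq_bounded_closed by blast
  moreover have "measure lebesgue (E - T) = measure lebesgue E - measure lebesgue T"
    using bounded_set_imp_lmeasurable[OF E(2,1)] fmeasurableD[OF lmeasurable_compact[OF \<open>compact T\<close>]]
      \<open>T \<subseteq> E\<close> by (rule measurable_measure_Diff)
  ultimately show thesis using that \<open>T \<subseteq> E\<close> by simp
qed

lemma borel_measurable_additive_linear:
  fixes f :: "real \<Rightarrow> real"
  assumes meas: "f \<in> borel_measurable lebesgue" and add: "\<And>x y. f (x + y) = f x + f y"
  shows "f x = f 1 * x"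
proof -
  define E where "E M = {0..1} \<inter> f -` {- real M..real M}" for M :: nat
  have E_bounded: "bounded (E M)" for M unfolding E_def by (rule bounded_Int) simp
  have E_sets: "E M \<in> sets lebesgue" for M
    using measurable_sets[OF meas, of "{- real M..real M}"] by (simp add: E_def sets.Int)
  note E = bounded_set_imp_lmeasurable[OF E_bounded E_sets]
  have "\<exists>M. measure lebesgue (E M) > 0"
  proof (rule ccontr)
    assume "\<nexists>M. measure lebesgue (E M) > 0"
    then have "measure lebesgue (E M) = 0" for M
      by (metis measure_nonneg not_less order.antisym)
    then have "E M \<in> null_sets lebesgue" for M
      using E[of M] by (simp add: null_sets_def emeasure_eq_measure2 fmeasurableD)
    then have "(\<Union>M. E M) \<in> null_sets lebesgue" by blast
    moreover have "(\<Union>M. E M) = {0..1}"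
    proof -
      have "\<exists>M::nat. f x \<in> {- real M..real M}" for x
        using real_nat_ceiling_ge[of "\<bar>f x\<bar>"] by (intro exI[of _ "nat \<lceil>\<bar>f x\<bar>\<rceil>"]) (simp del: of_nat_nat, linarith)
      then show ?thesis unfolding E_def by blast
    qed
    ultimately show False by (simp add: null_sets_def)
  qed
  then obtain M where "measure lebesgue (E M) > 0" by blast
  then obtain T where "compact T" "T \<subseteq> E M" "measure lebesgue T > 0"
    using lebesgue_inner_compact[OF E_sets E_bounded] by blast
  then obtain \<delta> where "\<delta> > 0" and meets: "\<And>t. norm t < \<delta> \<Longrightarrow> T \<inter> (+) t ` T \<noteq> {}"
    using compact_translates_intersect by blast
  have "\<bar>f t\<bar> \<le> 2 * real M" if t: "\<bar>t\<bar> < \<delta>" for t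
  proof -
    obtain y where "y \<in> T" "t + y \<in> T" using meets[of t] t by auto
    then have "y \<in> E M" "t + y \<in> E M" using \<open>T \<subseteq> E M\<close> by auto
    then have "\<bar>f y\<bar> \<le> real M" "\<bar>f (t + y)\<bar> \<le> real M" by (auto simp: E_def abs_le_iff)
    then show ?thesis using add[of t y] by linarith
  qed
  then show ?thesis using additive_bounded_near_zero_linear[where f=f, OF add \<open>\<delta> > 0\<close>] by blast
qed

lemma borel_measurable_comp_exp:
  fixes w :: "real \<Rightarrow> real"
  assumes meas: "w \<in> borel_measurable (lebesgue_on {0<..})"
  shows "(\<lambda>x. w (exp x)) \<in> borel_measurable lebesgue"
proof (rule measurableI)
  fix A :: "real set"
  assume "A \<in> sets borel"
  have pos: "{0::real<..} \<in> sets lebesgue" by simp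
  have "w -` A \<inter> {0<..} \<in> sets (lebesgue_on {0<..})"
    using measurable_sets[OF meas \<open>A \<in> sets borel\<close>] by simp
  then have "w -` A \<inter> {0<..} \<in> sets lebesgue"
    using pos by (simp add: sets_restrict_space_iff)
  moreover have "ln differentiable_on (w -` A \<inter> {0<..})"
    unfolding differentiable_on_def
    by (metis DERIV_ln Int_iff greaterThan_iff differentiable_at_withinI real_differentiable_def)
  ultimately have "ln ` (w -` A \<inter> {0<..}) \<in> sets lebesgue"
    by (intro differentiable_image_in_sets_lebesgue) simp_all
  moreover have "(\<lambda>x. w (exp x)) -` A \<inter> space lebesgue = ln ` (w -` A \<inter> {0<..})"
  proof (intro set_eqI iffI)
    fix x assume "x \<in> (\<lambda>x. w (exp x)) -` A \<inter> space lebesgue"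
    then show "x \<in> ln ` (w -` A \<inter> {0<..})" by (intro image_eqI[of x ln "exp x"]) auto
  qed auto
  ultimately show "(\<lambda>x. w (exp x)) -` A \<inter> space lebesgue \<in> sets lebesgue" by simp
qed simp

lemma borel_measurable_log_additive_eq_ln:
  fixes w :: "real \<Rightarrow> real"
  assumes meas: "w \<in> borel_measurable (lebesgue_on {0<..})"
    and mult: "\<And>x y. x > 0 \<Longrightarrow> y > 0 \<Longrightarrow> w (x * y) = w x + w y"
  obtains c where "\<And>x. x > 0 \<Longrightarrow> w x = c * ln x"
proof -
  have "w (exp s) = w (exp 1) * s" for s
    by (rule borel_measurable_additive_linear[OF borel_measurable_comp_exp[OF meas]])
      (simp add: exp_add mult)
  then have "w x = w (exp 1) * ln x" if "x > 0" for x
    using that by (metis exp_ln)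
  then show thesis by (rule that)
qed

section \<open>Jensen gaps\<close>

definition jensen_gap :: "(real \<Rightarrow> real) \<Rightarrow> real \<Rightarrow> real \<Rightarrow> real \<Rightarrow> real" where
  "jensen_gap \<phi> t x y = \<phi> (t * x + (1 - t) * y) - t * \<phi> x - (1 - t) * \<phi> y"

lemma jensen_gap_zero_vanishing_at_1_2:
  fixes h :: "real \<Rightarrow> real"
  assumes gap: "\<And>x y t. x > 0 \<Longrightarrow> y > 0 \<Longrightarrow> 0 < t \<Longrightarrow> t < 1 \<Longrightarrow> jensen_gap h t x y = 0"
    and "h 1 = 0" "h 2 = 0" and "x > 0"
  shows "h x = 0"
proof -
  consider "x \<in> {1, 2}" | "1 < x" "x < 2" | "2 < x" | "x < 1" by fastforce
  then show ?thesis
  proof cases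
    case 1
    then show ?thesis using \<open>h 1 = 0\<close> \<open>h 2 = 0\<close> by auto
  next
    case 2
    then have "h ((x - 1) * 2 + (1 - (x - 1)) * 1) = 0"
      using gap[of 2 1 "x - 1"] \<open>h 1 = 0\<close> \<open>h 2 = 0\<close> by (simp add: jensen_gap_def)
    then show ?thesis by (simp add: algebra_simps)
  next
    case 3
    define t where "t = 1 / (x - 1)"
    have "0 < t" "t < 1" "t * (x - 1) = 1" using 3 by (auto simp: t_def)
    then have two: "t * x + (1 - t) * 1 = 2" by (simp add: algebra_simps)
    have "h (t * x + (1 - t) * 1) = t * h x + (1 - t) * h 1"
      using gap[of x 1 t] \<open>x > 0\<close> \<open>0 < t\<close> \<open>t < 1\<close> unfolding jensen_gap_def by linarith
    then show ?thesis using \<open>h 1 = 0\<close> \<open>h 2 = 0\<close> \<open>0 < t\<close> unfolding two by simp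
  next
    case 4
    define t where "t = 1 / (2 - x)"
    have "0 < t" "t < 1" "t * (2 - x) = 1" using 4 \<open>x > 0\<close> by (auto simp: t_def)
    then have one: "t * x + (1 - t) * 2 = 1" by (simp add: algebra_simps)
    have "h (t * x + (1 - t) * 2) = t * h x + (1 - t) * h 2"
      using gap[of x 2 t] \<open>x > 0\<close> \<open>0 < t\<close> \<open>t < 1\<close> unfolding jensen_gap_def by linarith
    then show ?thesis using \<open>h 1 = 0\<close> \<open>h 2 = 0\<close> \<open>0 < t\<close> unfolding one by simp
  qed
qed

lemma jensen_gap_zero_imp_affine:
  fixes k :: "real \<Rightarrow> real"
  assumes gap: "\<And>x y t. x > 0 \<Longrightarrow> y > 0 \<Longrightarrow> 0 < t \<Longrightarrow> t < 1 \<Longrightarrow> jensen_gap k t x y = 0"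
    and "x > 0"
  shows "k x = k 1 + (k 2 - k 1) * (x - 1)"
proof -
  define h where "h x = k x - (k 1 + (k 2 - k 1) * (x - 1))" for x
  have same_gap: "jensen_gap h t x y = jensen_gap k t x y" for t x y
    unfolding h_def jensen_gap_def by algebra
  have "h x = 0"
  proof (rule jensen_gap_zero_vanishing_at_1_2[OF _ _ _ \<open>x > 0\<close>])
    show "jensen_gap h t x y = 0" if "x > 0" "y > 0" "0 < t" "t < 1" for x y t
      using gap[OF that] by (simp add: same_gap)
  qed (simp_all add: h_def)
  then show ?thesis by (simp add: h_def)
qed

lemma jensen_gap_scale_invariant_imp_log_affine:
  fixes b :: "real \<Rightarrow> real"
  assumes meas: "b \<in> borel_measurable (lebesgue_on {0<..})"
    and inv: "\<And>\<alpha> t x y. \<alpha> > 0 \<Longrightarrow> x > 0 \<Longrightarrow> y > 0 \<Longrightarrow> 0 < t \<Longrightarrow> t < 1 \<Longrightarrow>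
      jensen_gap b t (\<alpha> * x) (\<alpha> * y) = jensen_gap b t x y"
  obtains c \<kappa> d where "\<And>x. x > 0 \<Longrightarrow> b x = c * ln x + \<kappa> * x + d"
proof -
  define A where "A \<alpha> = (b (\<alpha> * 2) - b 2) - (b \<alpha> - b 1)" for \<alpha>
  have scale: "b (\<alpha> * x) - b x = b \<alpha> - b 1 + A \<alpha> * (x - 1)" if "\<alpha> > 0" "x > 0" for \<alpha> x
  proof -
    have "jensen_gap (\<lambda>x. b (\<alpha> * x) - b x) t x y = 0"
      if "x > 0" "y > 0" "0 < t" "t < 1" for t x y
    proof -
      have "t * (\<alpha> * x) + (1 - t) * (\<alpha> * y) = \<alpha> * (t * x + (1 - t) * y)"
        by (simp add: algebra_simps)
      then show ?thesis using inv[OF \<open>\<alpha> > 0\<close> that] unfolding jensen_gap_def by (simp add: right_diff_distrib)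
    qed
    from jensen_gap_zero_imp_affine[OF this \<open>x > 0\<close>] show ?thesis by (simp add: A_def)
  qed
  define \<kappa> where "\<kappa> = A 2"
  have A: "A \<alpha> = \<kappa> * (\<alpha> - 1)" if "\<alpha> > 0" for \<alpha>
    using scale[of \<alpha> 2] scale[of 2 \<alpha>] that by (simp add: \<kappa>_def mult.commute)
  define w where "w x = b x - b 1 - \<kappa> * (x - 1)" for x
  have "w (x * y) = w x + w y" if "x > 0" "y > 0" for x y
    using scale[of x y] A[of x] that unfolding w_def by (simp add: algebra_simps)
  moreover have "w \<in> borel_measurable (lebesgue_on {0<..})"
  proof -
    have "(\<lambda>x::real. x) \<in> borel_measurable (lebesgue_on {0<..})"
      by (intro measurable_restrict_space1 measurable_completion) simp
    then show ?thesis unfolding w_def using meas by measurable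
  qed
  ultimately obtain c where "\<And>x. x > 0 \<Longrightarrow> w x = c * ln x"
    using borel_measurable_log_additive_eq_ln by blast
  then have "b x = c * ln x + \<kappa> * x + (b 1 - \<kappa>)" if "x > 0" for x
    using that by (simp add: w_def algebra_simps)
  then show thesis by (rule that)
qed

lemma concave_on_pos_iff_jensen_gap_nonneg:
  "concave_on {0<..} \<phi> \<longleftrightarrow> (\<forall>x>0. \<forall>y>0. \<forall>t. 0 < t \<longrightarrow> t < 1 \<longrightarrow> 0 \<le> jensen_gap \<phi> t x y)"
proof
  assume conc: "concave_on {0<..} \<phi>"
  show "\<forall>x>0. \<forall>y>0. \<forall>t. 0 < t \<longrightarrow> t < 1 \<longrightarrow> 0 \<le> jensen_gap \<phi> t x y"
  proof (intro allI impI)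
    fix x y t :: real
    assume "0 < x" "0 < y" "0 < t" "t < 1"
    then have "- \<phi> (t *\<^sub>R x + (1 - t) *\<^sub>R y) \<le> t * - \<phi> x + (1 - t) * - \<phi> y"
      using conc unfolding concave_on_def convex_on_def by auto
    then show "0 \<le> jensen_gap \<phi> t x y" by (simp add: jensen_gap_def)
  qed
next
  assume gap: "\<forall>x>0. \<forall>y>0. \<forall>t. 0 < t \<longrightarrow> t < 1 \<longrightarrow> 0 \<le> jensen_gap \<phi> t x y"
  show "concave_on {0<..} \<phi>"
    unfolding concave_on_def convex_on_def
  proof (intro conjI ballI allI impI)
    fix x y u v :: real
    assume "x \<in> {0<..}" "y \<in> {0<..}" "0 \<le> u" "0 \<le> v" "u + v = 1"
    then consider "u = 0" "v = 1" | "v = 0" "u = 1" | "0 < u" "u < 1" "v = 1 - u" by fastforce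
    then show "- \<phi> (u *\<^sub>R x + v *\<^sub>R y) \<le> u * - \<phi> x + v * - \<phi> y"
    proof cases
      case 3
      then have "0 \<le> jensen_gap \<phi> u x y" using gap \<open>x \<in> {0<..}\<close> \<open>y \<in> {0<..}\<close> by simp
      then show ?thesis using \<open>v = 1 - u\<close> by (simp add: jensen_gap_def)
    qed simp_all
  qed simp
qed

section \<open>Coordinates and Lebesgue measurability\<close>

text \<open>Composition with a Lebesgue measurable function does not preserve Lebesgue measurability in
  general; it does for coordinate projections, because their preimages of null sets are null.\<close>

lemma null_sets_lborel_inner_Basis_vimage:
  fixes N :: "real set" and b :: "'a::euclidean_space"
  assumes N: "N \<in> null_sets lborel" and b: "b \<in> Basis"
  shows "{x. x \<bullet> b \<in> N} \<in> null_sets lborel"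
proof -
  define f where "f c t = (if c = b then indicator N t else (1::ennreal))" for c :: 'a and t :: real
  have N_sets: "N \<in> sets borel" using null_setsD2[OF N] by simp
  have S_sets: "{x. x \<bullet> b \<in> N} \<in> sets borel"
    using measurable_sets[of "\<lambda>x. x \<bullet> b" borel borel N] N_sets by (simp add: vimage_def)
  have "(\<Prod>c\<in>Basis. f c (x \<bullet> c)) = indicator {x. x \<bullet> b \<in> N} x" for x
    using b by (simp add: prod.remove[of Basis b] f_def indicator_def)
  then have "emeasure lborel {x. x \<bullet> b \<in> N} = (\<integral>\<^sup>+x. (\<Prod>c\<in>Basis. f c (x \<bullet> c)) \<partial>lborel)"
    using S_sets by simp
  also have "\<dots> = (\<Prod>c\<in>Basis. (\<integral>\<^sup>+t. f c t \<partial>lborel))"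
    using N_sets by (intro nn_integral_lborel_prod) (auto simp: f_def)
  also have "\<dots> = 0"
    using b null_setsD1[OF N] nn_integral_indicator[OF null_setsD2[OF N]]
    by (intro prod_zero) (auto simp: f_def intro!: bexI[of _ b])
  finally show ?thesis using S_sets by (simp add: null_sets_def)
qed

lemma borel_measurable_lebesgue_comp_inner_Basis:
  fixes h :: "real \<Rightarrow> real" and b :: "'a::euclidean_space"
  assumes h: "h \<in> borel_measurable lebesgue" and b: "b \<in> Basis"
  shows "(\<lambda>x. h (x \<bullet> b)) \<in> borel_measurable lebesgue"
proof -
  obtain h' where h': "h' \<in> borel_measurable lborel" and "AE t in lborel. h t = h' t"
    using completion_ex_borel_measurable_real[OF h] by blast
  then obtain N where N: "{t. h t \<noteq> h' t} \<subseteq> N" "N \<in> null_sets lborel"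
    by (auto elim!: AE_E simp: null_sets_def)
  have "h' \<in> borel_measurable borel" using h' by simp
  then have "(\<lambda>x. h' (x \<bullet> b)) \<in> borel_measurable lebesgue"
    by (intro measurable_completion) simp
  moreover have "AE x in lebesgue. h' (x \<bullet> b) = h (x \<bullet> b)"
  proof (rule AE_I')
    show "{x. x \<bullet> b \<in> N} \<in> null_sets lebesgue"
      by (rule null_sets_completionI[OF null_sets_lborel_inner_Basis_vimage[OF N(2) b]])
  qed (use N(1) in auto)
  ultimately show ?thesis by (rule borel_measurable_AE)
qed

section \<open>The simplex and the domain Dn\<close>

lemma prob_simplex_nonneg: "p \<in> prob_simplex \<Longrightarrow> 0 \<le> p $ i"
  by (simp add: prob_simplex_def)

lemma sum_supp_vec_eq_sum:
  fixes p :: "real ^ 'n"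
  assumes "p \<in> prob_simplex"
  shows "(\<Sum>i\<in>supp_vec p. p $ i * h i) = (\<Sum>i\<in>UNIV. p $ i * h i)"
proof (rule sum.mono_neutral_left)
  show "\<forall>i\<in>UNIV - supp_vec p. p $ i * h i = 0"
    using prob_simplex_nonneg[OF assms] by (auto simp: supp_vec_def order.order_iff_strict)
qed auto

lemma sum_supp_vec_prob_simplex:
  fixes p :: "real ^ 'n"
  assumes "p \<in> prob_simplex"
  shows "(\<Sum>i\<in>supp_vec p. p $ i) = 1"
  using sum_supp_vec_eq_sum[OF assms, of "\<lambda>_. 1"] assms by (simp add: prob_simplex_def)

lemma sum_supp_vec_const:
  fixes p :: "real ^ 'n"
  assumes "p \<in> prob_simplex"
  shows "(\<Sum>i\<in>supp_vec p. p $ i * c) = c"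
  using sum_supp_vec_prob_simplex[OF assms] by (simp add: sum_distrib_right[symmetric])

lemma supp_vec_prob_simplex_nonempty: "p \<in> prob_simplex \<Longrightarrow> supp_vec p \<noteq> {}"
  using sum_supp_vec_prob_simplex by force

lemma DnD:
  assumes "(p, R) \<in> Dn"
  shows "p \<in> prob_simplex" "0 \<le> R $ i" "i \<in> supp_vec p \<Longrightarrow> 0 < R $ i"
    "i \<in> supp_vec p \<Longrightarrow> 0 < p $ i"
  using assms by (auto simp: Dn_def supp_vec_def)

lemma Dn_sum_supp_vec_eq_inner:
  assumes "(p, R) \<in> Dn"
  shows "(\<Sum>i\<in>supp_vec p. p $ i * R $ i) = p \<bullet> R"
  using sum_supp_vec_eq_sum[OF DnD(1)[OF assms]] by (simp add: inner_vec_def)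

lemma Dn_inner_pos:
  assumes "(p, R) \<in> Dn"
  shows "p \<bullet> R > 0"
proof -
  have "0 < (\<Sum>i\<in>supp_vec p. p $ i * R $ i)"
    using supp_vec_prob_simplex_nonempty[OF DnD(1)[OF assms]] DnD(3,4)[OF assms]
    by (intro sum_pos) auto
  then show ?thesis using Dn_sum_supp_vec_eq_inner[OF assms] by simp
qed

lemma Dn_imp_Rset:
  assumes "(p, R) \<in> Dn"
  shows "R \<in> Rset"
proof -
  obtain k where "k \<in> supp_vec p"
    using supp_vec_prob_simplex_nonempty[OF DnD(1)[OF assms]] by blast
  then have "R \<noteq> 0" using DnD(3)[OF assms] by fastforce
  then show ?thesis using DnD(2)[OF assms] by (simp add: Rset_def)
qed

lemma Dn_scaleR:
  assumes "(p, R) \<in> Dn" "\<alpha> > 0"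
  shows "(p, \<alpha> *\<^sub>R R) \<in> Dn"
  using assms by (auto simp: Dn_def supp_vec_def zero_less_mult_iff)

lemma supp_vec_axis: "supp_vec (axis k (1::real)) = {k}"
  by (auto simp: supp_vec_def axis_def)

lemma axis_Dn:
  fixes R :: "real ^ 'n"
  assumes "\<And>i. 0 \<le> R $ i" "0 < R $ k"
  shows "(axis k 1, R) \<in> Dn"
  using assms
  by (auto simp: Dn_def supp_vec_axis prob_simplex_def axis_def supp_vec_def)

lemma convex_prob_simplex: "convex prob_simplex"
proof (rule convexI)
  fix p q :: "real ^ 'n" and u v :: real
  assume "p \<in> prob_simplex" "q \<in> prob_simplex" "0 \<le> u" "0 \<le> v" "u + v = 1"
  moreover have "u * p $ i + v * q $ i \<le> u + v" if "p $ i \<le> 1" "q $ i \<le> 1" for i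
    using that \<open>0 \<le> u\<close> \<open>0 \<le> v\<close> by (intro add_mono) (simp_all add: mult_left_le)
  ultimately show "u *\<^sub>R p + v *\<^sub>R q \<in> prob_simplex"
    by (auto simp: prob_simplex_def sum.distrib sum_distrib_left[symmetric])
qed

lemma convex_Dcond: "convex (Dcond (R :: real ^ 'n))"
proof (rule convexI)
  fix p q :: "real ^ 'n" and u v :: real
  assume p: "p \<in> Dcond R" and q: "q \<in> Dcond R" and uv: "0 \<le> u" "0 \<le> v" "u + v = 1"
  then have pD: "(p, R) \<in> Dn" and qD: "(q, R) \<in> Dn" by (auto simp: Dcond_def)
  have "u *\<^sub>R p + v *\<^sub>R q \<in> prob_simplex"
    by (rule convexD[OF convex_prob_simplex DnD(1)[OF pD] DnD(1)[OF qD] uv])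
  moreover have "supp_vec (u *\<^sub>R p + v *\<^sub>R q) \<subseteq> supp_vec p \<union> supp_vec q"
    using prob_simplex_nonneg[OF DnD(1)[OF pD]] prob_simplex_nonneg[OF DnD(1)[OF qD]] uv
    by (auto simp: supp_vec_def) (metis add.right_neutral less_eq_real_def mult_zero_right not_le)
  ultimately show "u *\<^sub>R p + v *\<^sub>R q \<in> Dcond R"
    using pD qD by (auto simp: Dcond_def Dn_def)
qed

definition pair_vec :: "'n \<Rightarrow> 'n \<Rightarrow> real \<Rightarrow> real \<Rightarrow> real ^ 'n" where
  "pair_vec i j x y = (\<chi> k. if k = i then x else if k = j then y else 0)"

lemma pair_vec_nth:
  "i \<noteq> j \<Longrightarrow> pair_vec i j x y $ i = x" "i \<noteq> j \<Longrightarrow> pair_vec i j x y $ j = y"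
  "k \<noteq> i \<Longrightarrow> k \<noteq> j \<Longrightarrow> pair_vec i j x y $ k = 0"
  by (auto simp: pair_vec_def)

lemma pair_vec_nonneg: "0 \<le> x \<Longrightarrow> 0 \<le> y \<Longrightarrow> 0 \<le> pair_vec i j x y $ k"
  by (simp add: pair_vec_def)

lemma supp_vec_pair_vec: "i \<noteq> j \<Longrightarrow> 0 < x \<Longrightarrow> 0 < y \<Longrightarrow> supp_vec (pair_vec i j x y) = {i, j}"
  by (auto simp: supp_vec_def pair_vec_def)

lemma scaleR_pair_vec: "\<alpha> *\<^sub>R pair_vec i j x y = pair_vec i j (\<alpha> * x) (\<alpha> * y)"
  by (vector pair_vec_def)

lemma pair_vec_Dn:
  assumes "i \<noteq> j" "0 < t" "t < 1" "0 < x" "0 < y"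
  shows "(pair_vec i j t (1 - t), pair_vec i j x y) \<in> Dn"
proof -
  have "(\<Sum>k\<in>UNIV. pair_vec i j t (1 - t) $ k) = (\<Sum>k\<in>{i, j}. pair_vec i j t (1 - t) $ k)"
    by (rule sum.mono_neutral_right) (auto simp: pair_vec_def)
  then have "pair_vec i j t (1 - t) \<in> prob_simplex"
    using assms by (auto simp: prob_simplex_def pair_vec_def)
  then show ?thesis
    using assms by (auto simp: Dn_def supp_vec_pair_vec pair_vec_nonneg)
qed

lemma obtain_distinct_indices:
  assumes "CARD('n) \<ge> 2"
  obtains i j :: "'n::finite" where "i \<noteq> j"
  using assms card_le_Suc0_iff_eq[of "UNIV :: 'n set"] by fastforce

section \<open>Gap functions\<close>

text \<open>Extending the generator by 0 turns the sum over supp p into a sum over all indices, linear in p,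
  and makes it Lebesgue measurable on all of the real line.\<close>

definition zero_outside_pos :: "(real \<Rightarrow> real) \<Rightarrow> real \<Rightarrow> real" where
  "zero_outside_pos \<phi> x = (if 0 < x then \<phi> x else 0)"

lemma gap_function_eq_inner:
  fixes g :: "real ^ 'n \<Rightarrow> real ^ 'n \<Rightarrow> real"
  assumes gap: "is_gap_function g \<phi>" and pR: "(p, R) \<in> Dn"
  shows "g p R = \<phi> (p \<bullet> R) - (\<Sum>i\<in>UNIV. p $ i * zero_outside_pos \<phi> (R $ i))"
proof -
  have "g p R = \<phi> (\<Sum>i\<in>supp_vec p. p $ i * R $ i) - (\<Sum>i\<in>supp_vec p. p $ i * \<phi> (R $ i))"
    using gap pR unfolding is_gap_function_def by blast
  also have "(\<Sum>i\<in>supp_vec p. p $ i * \<phi> (R $ i)) = (\<Sum>i\<in>supp_vec p. p $ i * zero_outside_pos \<phi> (R $ i))"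
    using DnD(3)[OF pR] by (intro sum.cong) (simp_all add: zero_outside_pos_def)
  finally show ?thesis
    by (simp add: Dn_sum_supp_vec_eq_inner[OF pR] sum_supp_vec_eq_sum[OF DnD(1)[OF pR]])
qed

lemma gap_function_D2:
  fixes g :: "real ^ 'n \<Rightarrow> real ^ 'n \<Rightarrow> real"
  assumes gap: "is_gap_function g \<phi>"
  shows "D2 g"
  unfolding D2_def
proof (clarify)
  fix p R :: "real ^ 'n"
  assume pR: "(p, R) \<in> Dn" and const: "\<forall>i\<in>supp_vec p. \<forall>j\<in>supp_vec p. R $ i = R $ j"
  obtain k where k: "k \<in> supp_vec p"
    using supp_vec_prob_simplex_nonempty[OF DnD(1)[OF pR]] by blast
  have Rk: "R $ i = R $ k" if "i \<in> supp_vec p" for i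
    using const k that by blast
  have const_sum: "(\<Sum>i\<in>supp_vec p. p $ i * h (R $ i)) = h (R $ k)" for h :: "real \<Rightarrow> real"
  proof -
    have "(\<Sum>i\<in>supp_vec p. p $ i * h (R $ i)) = (\<Sum>i\<in>supp_vec p. p $ i * h (R $ k))"
      by (intro sum.cong) (simp_all add: Rk)
    then show ?thesis using sum_supp_vec_const[OF DnD(1)[OF pR]] by simp
  qed
  have "g p R = \<phi> (\<Sum>i\<in>supp_vec p. p $ i * R $ i) - (\<Sum>i\<in>supp_vec p. p $ i * \<phi> (R $ i))"
    using gap pR unfolding is_gap_function_def by blast
  then show "g p R = 0" using const_sum[of "\<lambda>x. x"] const_sum[of \<phi>] by simp
qed

lemma gap_function_D4:
  fixes g :: "real ^ 'n \<Rightarrow> real ^ 'n \<Rightarrow> real"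
  assumes meas: "\<phi> \<in> borel_measurable (lebesgue_on {0<..})" and gap: "is_gap_function g \<phi>"
  shows "D4 g"
  unfolding D4_def
proof (intro exI conjI)
  define a where "a R = (\<chi> i. - zero_outside_pos \<phi> ((R :: real ^ 'n) $ i))" for R
  have "zero_outside_pos \<phi> = (\<lambda>x. if x \<in> {0<..} then \<phi> x else 0)"
    by (auto simp: zero_outside_pos_def)
  then have "zero_outside_pos \<phi> \<in> borel_measurable lebesgue"
    using borel_measurable_if_I[OF meas] by simp
  then have "(\<lambda>R. a R \<bullet> b) \<in> borel_measurable lebesgue" if b: "b \<in> Basis" for b
  proof -
    obtain i where "b = axis i 1" using b by (auto simp: Basis_vec_def)
    then have "(\<lambda>R. a R \<bullet> b) = (\<lambda>R. - zero_outside_pos \<phi> (R \<bullet> b))"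
      by (simp add: a_def inner_axis)
    then show ?thesis
      using borel_measurable_lebesgue_comp_inner_Basis[OF \<open>zero_outside_pos \<phi> \<in> _\<close> b] by simp
  qed
  then have "a \<in> borel_measurable lebesgue"
    by (subst borel_measurable_euclidean_space) blast
  then show "a \<in> borel_measurable (lebesgue_on Rset)"
    by (rule measurable_restrict_space1)
  show "\<phi> \<in> borel_measurable (lebesgue_on {0<..})" by (rule meas)
  show "\<forall>m>0. \<forall>R\<in>Rset. \<forall>p\<in>Cset m R. g p R = a R \<bullet> p + \<phi> m"
  proof (intro allI impI ballI)
    fix m and R p :: "real ^ 'n"
    assume "p \<in> Cset m R"
    then have pR: "(p, R) \<in> Dn" and "p \<bullet> R = m" by (auto simp: Cset_def Dcond_def)
    have "a R \<bullet> p = - (\<Sum>i\<in>UNIV. p $ i * zero_outside_pos \<phi> (R $ i))"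
      by (simp add: a_def inner_vec_def sum_negf mult.commute)
    then show "g p R = a R \<bullet> p + \<phi> m"
      using gap_function_eq_inner[OF gap pR] \<open>p \<bullet> R = m\<close> by simp
  qed
qed

lemma D2_axis:
  assumes "D2 g" "(axis k 1, R) \<in> Dn"
  shows "g (axis k 1) R = 0"
  using assms by (auto simp: D2_def supp_vec_axis)

lemma gap_function_of_D2_D4:
  fixes g :: "real ^ 'n \<Rightarrow> real ^ 'n \<Rightarrow> real"
  assumes D2: "D2 g" and affine: "\<forall>m>0. \<forall>R\<in>Rset. \<forall>p\<in>Cset m R. g p R = a R \<bullet> p + b m"
  shows "is_gap_function g b"
  unfolding is_gap_function_def
proof (clarify)
  fix p R :: "real ^ 'n"
  assume pR: "(p, R) \<in> Dn"
  have "p \<in> Cset (p \<bullet> R) R" using pR by (simp add: Cset_def Dcond_def)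
  then have g: "g p R = a R \<bullet> p + b (p \<bullet> R)"
    using affine Dn_inner_pos[OF pR] Dn_imp_Rset[OF pR] by blast
  have a: "a R $ k = - b (R $ k)" if "k \<in> supp_vec p" for k
  proof -
    have ekR: "(axis k 1, R) \<in> Dn" by (rule axis_Dn[OF DnD(2)[OF pR] DnD(3)[OF pR that]])
    then have "axis k 1 \<in> Cset (R $ k) R" by (simp add: Cset_def Dcond_def inner_axis')
    then have "g (axis k 1) R = a R \<bullet> axis k 1 + b (R $ k)"
      using affine DnD(3)[OF pR that] Dn_imp_Rset[OF pR] by blast
    moreover have "g (axis k 1) R = 0" by (rule D2_axis[OF D2 ekR])
    ultimately show ?thesis by (simp add: inner_axis)
  qed
  have "a R \<bullet> p = (\<Sum>i\<in>UNIV. p $ i * a R $ i)"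
    by (simp add: inner_vec_def mult.commute)
  also have "\<dots> = (\<Sum>i\<in>supp_vec p. p $ i * a R $ i)"
    by (rule sum_supp_vec_eq_sum[OF DnD(1)[OF pR], symmetric])
  also have "\<dots> = - (\<Sum>i\<in>supp_vec p. p $ i * b (R $ i))"
    by (simp add: a sum_negf[symmetric])
  finally show "g p R = b (\<Sum>i\<in>supp_vec p. p $ i * R $ i) - (\<Sum>i\<in>supp_vec p. p $ i * b (R $ i))"
    using g Dn_sum_supp_vec_eq_inner[OF pR] by simp
qed

lemma gap_function_iff_D2_D4:
  "(\<exists>\<phi>. \<phi> \<in> borel_measurable (lebesgue_on {0<..}) \<and> is_gap_function g \<phi>) \<longleftrightarrow> D2 g \<and> D4 g"
proof
  assume "\<exists>\<phi>. \<phi> \<in> borel_measurable (lebesgue_on {0<..}) \<and> is_gap_function g \<phi>"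
  then show "D2 g \<and> D4 g" using gap_function_D2 gap_function_D4 by blast
next
  assume "D2 g \<and> D4 g"
  then show "\<exists>\<phi>. \<phi> \<in> borel_measurable (lebesgue_on {0<..}) \<and> is_gap_function g \<phi>"
    unfolding D4_def using gap_function_of_D2_D4 by blast
qed

lemma gap_function_pair_vec:
  fixes g :: "real ^ 'n \<Rightarrow> real ^ 'n \<Rightarrow> real"
  assumes gap: "is_gap_function g \<phi>" and "i \<noteq> j" "0 < t" "t < 1" "0 < x" "0 < y"
  shows "g (pair_vec i j t (1 - t)) (pair_vec i j x y) = jensen_gap \<phi> t x y"
proof -
  let ?p = "pair_vec i j t (1 - t)" and ?R = "pair_vec i j x y"
  have "g ?p ?R = \<phi> (\<Sum>k\<in>supp_vec ?p. ?p $ k * ?R $ k) - (\<Sum>k\<in>supp_vec ?p. ?p $ k * \<phi> (?R $ k))"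
    using gap pair_vec_Dn[OF assms(2-)] unfolding is_gap_function_def by blast
  then show ?thesis
    using assms(2-) by (simp add: supp_vec_pair_vec pair_vec_nth jensen_gap_def)
qed

lemma concave_generator_imp_D1:
  fixes g :: "real ^ 'n \<Rightarrow> real ^ 'n \<Rightarrow> real"
  assumes gap: "is_gap_function g \<phi>" and conc: "concave_on {0<..} \<phi>"
  shows "D1 g"
  unfolding D1_def
proof (intro ballI)
  fix R :: "real ^ 'n"
  define L where "L p = (\<Sum>i\<in>UNIV. p $ i * zero_outside_pos \<phi> (R $ i))" for p :: "real ^ 'n"
  have g: "g p R = \<phi> (p \<bullet> R) - L p" if "p \<in> Dcond R" for p
    using gap_function_eq_inner[OF gap] that by (simp add: Dcond_def L_def)
  show "concave_on (Dcond R) (\<lambda>p. g p R)"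
    unfolding concave_on_iff
  proof (intro conjI convex_Dcond ballI allI impI)
    fix p q :: "real ^ 'n" and u v :: real
    assume p: "p \<in> Dcond R" and q: "q \<in> Dcond R" and uv: "0 \<le> u" "0 \<le> v" "u + v = 1"
    have r: "u *\<^sub>R p + v *\<^sub>R q \<in> Dcond R" by (rule convexD[OF convex_Dcond p q uv])
    have conc_uv: "u * \<phi> (p \<bullet> R) + v * \<phi> (q \<bullet> R) \<le> \<phi> (u * (p \<bullet> R) + v * (q \<bullet> R))"
      using concave_onD[OF conc, of v "p \<bullet> R" "q \<bullet> R"] uv p q
      by (simp add: Dcond_def Dn_inner_pos eq_diff_eq[symmetric])
    have "L (u *\<^sub>R p + v *\<^sub>R q) = u * L p + v * L q"
      by (simp add: L_def sum.distrib sum_distrib_left algebra_simps)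
    moreover have "(u *\<^sub>R p + v *\<^sub>R q) \<bullet> R = u * (p \<bullet> R) + v * (q \<bullet> R)"
      by (simp add: inner_add_left)
    ultimately have "g (u *\<^sub>R p + v *\<^sub>R q) R = \<phi> (u * (p \<bullet> R) + v * (q \<bullet> R)) - (u * L p + v * L q)"
      using g[OF r] by simp
    then show "u * g p R + v * g q R \<le> g (u *\<^sub>R p + v *\<^sub>R q) R"
      using conc_uv g[OF p] g[OF q] by (simp add: right_diff_distrib)
  qed
qed

lemma D1_imp_concave_generator:
  fixes g :: "real ^ 'n \<Rightarrow> real ^ 'n \<Rightarrow> real"
  assumes gap: "is_gap_function g \<phi>" and D1: "D1 g" and n2: "CARD('n) \<ge> 2"
  shows "concave_on {0<..} \<phi>"
proof -
  obtain i j :: 'n where "i \<noteq> j" using obtain_distinct_indices[OF n2] .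
  have "0 \<le> jensen_gap \<phi> t x y" if "0 < x" "0 < y" "0 < t" "t < 1" for x y t
  proof -
    define R where "R = pair_vec i j x y"
    have Rnn: "0 \<le> R $ k" for k using that by (simp add: R_def pair_vec_nonneg)
    have ei: "(axis i 1, R) \<in> Dn" and ej: "(axis j 1, R) \<in> Dn"
      using axis_Dn[OF Rnn] \<open>i \<noteq> j\<close> that by (simp_all add: R_def pair_vec_nth)
    have "R \<in> Rset"
      using Dn_imp_Rset[OF pair_vec_Dn[OF \<open>i \<noteq> j\<close> \<open>0 < t\<close> \<open>t < 1\<close> that(1,2)]] by (simp add: R_def)
    then have "concave_on (Dcond R) (\<lambda>p. g p R)" using D1 by (simp add: D1_def)
    then have "t * g (axis i 1) R + (1 - t) * g (axis j 1) R \<le> g (t *\<^sub>R axis i 1 + (1 - t) *\<^sub>R axis j 1) R"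
      using ei ej that by (simp add: concave_on_iff Dcond_def)
    moreover have "t *\<^sub>R axis i 1 + (1 - t) *\<^sub>R axis j 1 = pair_vec i j t (1 - t)"
      using \<open>i \<noteq> j\<close> by (vector pair_vec_def axis_def)
    ultimately show ?thesis
      using D2_axis[OF gap_function_D2[OF gap] ei] D2_axis[OF gap_function_D2[OF gap] ej]
        gap_function_pair_vec[OF gap \<open>i \<noteq> j\<close> \<open>0 < t\<close> \<open>t < 1\<close> that(1,2)]
      by (simp add: R_def)
  qed
  then show ?thesis by (simp add: concave_on_pos_iff_jensen_gap_nonneg)
qed

lemma concave_generator_iff_D1:
  fixes g :: "real ^ 'n \<Rightarrow> real ^ 'n \<Rightarrow> real"
  assumes "is_gap_function g \<phi>" "CARD('n) \<ge> 2"
  shows "concave_on {0<..} \<phi> \<longleftrightarrow> D1 g"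
  using concave_generator_imp_D1 D1_imp_concave_generator assms by blast

section \<open>Multiples of the excess growth rate\<close>

lemma gap_function_Gamma_multiple:
  fixes g :: "real ^ 'n \<Rightarrow> real ^ 'n \<Rightarrow> real"
  assumes "\<forall>(p, R) \<in> Dn. g p R = c * Gamma p R"
  shows "is_gap_function g (\<lambda>x. c * ln x)"
  using assms unfolding is_gap_function_def Gamma_def
  by (auto simp: right_diff_distrib sum_distrib_left mult.left_commute)

lemma Gamma_scaleR:
  assumes pR: "(p, R) \<in> Dn" and "\<alpha> > 0"
  shows "Gamma p (\<alpha> *\<^sub>R R) = Gamma p R"
proof -
  have "(\<Sum>i\<in>supp_vec p. p $ i * ln ((\<alpha> *\<^sub>R R) $ i)) = (\<Sum>i\<in>supp_vec p. p $ i * ln \<alpha> + p $ i * ln (R $ i))"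
  proof (intro sum.cong refl)
    fix i assume "i \<in> supp_vec p"
    then have "R $ i > 0" by (rule DnD(3)[OF pR])
    then show "p $ i * ln ((\<alpha> *\<^sub>R R) $ i) = p $ i * ln \<alpha> + p $ i * ln (R $ i)"
      using \<open>\<alpha> > 0\<close> by (simp add: ln_mult distrib_left)
  qed
  also have "\<dots> = ln \<alpha> + (\<Sum>i\<in>supp_vec p. p $ i * ln (R $ i))"
    by (simp add: sum.distrib sum_supp_vec_const[OF DnD(1)[OF pR]])
  finally have ln_sum: "(\<Sum>i\<in>supp_vec p. p $ i * ln ((\<alpha> *\<^sub>R R) $ i))
      = ln \<alpha> + (\<Sum>i\<in>supp_vec p. p $ i * ln (R $ i))" .
  have "(\<Sum>i\<in>supp_vec p. p $ i * (\<alpha> *\<^sub>R R) $ i) = \<alpha> * (p \<bullet> R)"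
    by (simp add: sum_distrib_left mult.left_commute Dn_sum_supp_vec_eq_inner[OF pR, symmetric])
  moreover have "ln (\<alpha> * (p \<bullet> R)) = ln \<alpha> + ln (p \<bullet> R)"
    using \<open>\<alpha> > 0\<close> Dn_inner_pos[OF pR] by (simp add: ln_mult)
  ultimately show ?thesis
    unfolding Gamma_def ln_sum by (simp add: Dn_sum_supp_vec_eq_inner[OF pR])
qed

lemma D3_Gamma_multiple:
  fixes g :: "real ^ 'n \<Rightarrow> real ^ 'n \<Rightarrow> real"
  assumes G: "\<forall>(p, R) \<in> Dn. g p R = c * Gamma p R"
  shows "D3 g"
  unfolding D3_def
proof (clarify)
  fix p R :: "real ^ 'n" and \<alpha> :: real
  assume pR: "(p, R) \<in> Dn" and "\<alpha> > 0"
  have "g p (\<alpha> *\<^sub>R R) = c * Gamma p (\<alpha> *\<^sub>R R)" using G Dn_scaleR[OF pR \<open>\<alpha> > 0\<close>] by blast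
  moreover have "g p R = c * Gamma p R" using G pR by blast
  ultimately show "g p (\<alpha> *\<^sub>R R) = g p R" by (simp add: Gamma_scaleR[OF pR \<open>\<alpha> > 0\<close>])
qed

lemma gap_function_log_affine_generator:
  fixes g :: "real ^ 'n \<Rightarrow> real ^ 'n \<Rightarrow> real"
  assumes gap: "is_gap_function g b" and b: "\<And>x. x > 0 \<Longrightarrow> b x = c * ln x + \<kappa> * x + d"
    and pR: "(p, R) \<in> Dn"
  shows "g p R = c * Gamma p R"
proof -
  define m where "m = (\<Sum>i\<in>supp_vec p. p $ i * R $ i)"
  have "m > 0" using Dn_inner_pos[OF pR] Dn_sum_supp_vec_eq_inner[OF pR] by (simp add: m_def)
  have "(\<Sum>i\<in>supp_vec p. p $ i * b (R $ i))
      = (\<Sum>i\<in>supp_vec p. c * (p $ i * ln (R $ i)) + \<kappa> * (p $ i * R $ i) + p $ i * d)"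
    using DnD(3)[OF pR] by (intro sum.cong) (simp_all add: b algebra_simps)
  also have "\<dots> = c * (\<Sum>i\<in>supp_vec p. p $ i * ln (R $ i)) + \<kappa> * m + d"
    by (simp add: sum.distrib sum_distrib_left m_def sum_supp_vec_const[OF DnD(1)[OF pR]])
  finally have "(\<Sum>i\<in>supp_vec p. p $ i * b (R $ i)) = \<dots>" .
  moreover have "g p R = b m - (\<Sum>i\<in>supp_vec p. p $ i * b (R $ i))"
    using gap pR unfolding is_gap_function_def m_def by blast
  ultimately show ?thesis
    using b[OF \<open>m > 0\<close>] by (simp add: Gamma_def m_def algebra_simps)
qed

lemma D3_imp_jensen_gap_scale_invariant:
  fixes g :: "real ^ 'n \<Rightarrow> real ^ 'n \<Rightarrow> real"
  assumes gap: "is_gap_function g b" and D3: "D3 g" and n2: "CARD('n) \<ge> 2"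
    and "\<alpha> > 0" "x > 0" "y > 0" "0 < t" "t < 1"
  shows "jensen_gap b t (\<alpha> * x) (\<alpha> * y) = jensen_gap b t x y"
proof -
  obtain i j :: 'n where "i \<noteq> j" using obtain_distinct_indices[OF n2] .
  have "g (pair_vec i j t (1 - t)) (\<alpha> *\<^sub>R pair_vec i j x y) = g (pair_vec i j t (1 - t)) (pair_vec i j x y)"
    using D3 pair_vec_Dn[OF \<open>i \<noteq> j\<close> \<open>0 < t\<close> \<open>t < 1\<close> \<open>x > 0\<close> \<open>y > 0\<close>] \<open>\<alpha> > 0\<close>
    unfolding D3_def by blast
  then show ?thesis
    using assms(4-) by (simp add: scaleR_pair_vec gap_function_pair_vec[OF gap \<open>i \<noteq> j\<close>])
qed

lemma D2_D3_D4_imp_Gamma_multiple: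
  fixes g :: "real ^ 'n \<Rightarrow> real ^ 'n \<Rightarrow> real"
  assumes n2: "CARD('n) \<ge> 2" and "D2 g" "D3 g" "D4 g"
  shows "\<exists>c. \<forall>(p, R) \<in> Dn. g p R = c * Gamma p R"
proof -
  obtain b where meas: "b \<in> borel_measurable (lebesgue_on {0<..})" and gap: "is_gap_function g b"
    using gap_function_iff_D2_D4 \<open>D2 g\<close> \<open>D4 g\<close> by blast
  obtain c \<kappa> d where "\<And>x. x > 0 \<Longrightarrow> b x = c * ln x + \<kappa> * x + d"
    using jensen_gap_scale_invariant_imp_log_affine[OF meas
        D3_imp_jensen_gap_scale_invariant[OF gap \<open>D3 g\<close> n2]] by blast
  then show ?thesis using gap_function_log_affine_generator[OF gap] by blast
qed

lemma borel_measurable_cmult_ln: "(\<lambda>x. c * ln x :: real) \<in> borel_measurable (lebesgue_on {0<..})"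
proof -
  have "(\<lambda>x::real. c * ln x) \<in> borel_measurable borel" by measurable
  then show ?thesis by (intro measurable_restrict_space1 measurable_completion) simp
qed

lemma D2_D3_D4_iff_Gamma_multiple:
  fixes g :: "real ^ 'n \<Rightarrow> real ^ 'n \<Rightarrow> real"
  assumes "CARD('n) \<ge> 2"
  shows "D2 g \<and> D3 g \<and> D4 g \<longleftrightarrow> (\<exists>c. \<forall>(p, R) \<in> Dn. g p R = c * Gamma p R)"
proof
  assume "\<exists>c. \<forall>(p, R) \<in> Dn. g p R = c * Gamma p R"
  then obtain c where G: "\<forall>(p, R) \<in> Dn. g p R = c * Gamma p R" ..
  note gap = gap_function_Gamma_multiple[OF G]
  show "D2 g \<and> D3 g \<and> D4 g"
    using gap_function_D2[OF gap] D3_Gamma_multiple[OF G]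
      gap_function_D4[OF borel_measurable_cmult_ln gap] by blast
qed (use D2_D3_D4_imp_Gamma_multiple[OF assms] in blast)

lemma concave_on_cmult_ln_iff: "concave_on {0<..} (\<lambda>x. c * ln x) \<longleftrightarrow> c \<ge> 0"
proof
  assume "concave_on {0<..} (\<lambda>x. c * ln x)"
  then have "0 \<le> jensen_gap (\<lambda>x. c * ln x) (1/2) 1 4"
    by (simp add: concave_on_pos_iff_jensen_gap_nonneg)
  also have "jensen_gap (\<lambda>x. c * ln x) (1/2) 1 4 = c * (ln (5/2) - ln 2)"
    using ln_mult[of 2 2] by (simp add: jensen_gap_def algebra_simps)
  finally show "c \<ge> 0" by (simp add: zero_le_mult_iff)
qed (simp add: concave_on_cmul ln_concave)

lemma Gamma_multiple_nonneg_iff_D1: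
  fixes g :: "real ^ 'n \<Rightarrow> real ^ 'n \<Rightarrow> real"
  assumes "CARD('n) \<ge> 2" and "\<forall>(p, R) \<in> Dn. g p R = c * Gamma p R"
  shows "c \<ge> 0 \<longleftrightarrow> D1 g"
  using concave_generator_iff_D1[OF gap_function_Gamma_multiple[OF assms(2)] assms(1)]
  by (simp add: concave_on_cmult_ln_iff)

theorem mainTheorem11:
  fixes g :: "real ^ 'n \<Rightarrow> real ^ 'n \<Rightarrow> real"
  assumes n2: "CARD('n) \<ge> 2"
    and meas: "(\<lambda>(p, R). g p R) \<in> borel_measurable (lebesgue_on (Dn :: ((real ^ 'n) \<times> (real ^ 'n)) set))"
  shows "((\<exists>\<phi>. \<phi> \<in> borel_measurable (lebesgue_on {0<..}) \<and> is_gap_function g \<phi>) \<longleftrightarrow> D2 g \<and> D4 g)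
       \<and> (\<forall>\<phi>. \<phi> \<in> borel_measurable (lebesgue_on {0<..}) \<and> is_gap_function g \<phi> \<longrightarrow>
             (concave_on {0<..} \<phi> \<longleftrightarrow> D1 g))
       \<and> ((D2 g \<and> D3 g \<and> D4 g) \<longleftrightarrow> (\<exists>c::real. \<forall>(p, R) \<in> Dn. g p R = c * Gamma p R))
       \<and> (\<forall>c::real. (\<forall>(p, R) \<in> Dn. g p R = c * Gamma p R) \<longrightarrow> (c \<ge> 0 \<longleftrightarrow> D1 g))"
  using gap_function_iff_D2_D4[of g] concave_generator_iff_D1[OF _ n2]
    D2_D3_D4_iff_Gamma_multiple[OF n2] Gamma_multiple_nonneg_iff_D1[OF n2]
  by blast

end
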